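(* Let $\gamma(z)=\sum_{n=1}^{\infty} z^{n-1}\left(\frac{1}{n}-\log\frac{n+1}{n}\right)$ for $z$ in the closed unit disk $D=\{z\in\mathbb{C}:|z|\le 1\}$. Then $\gamma$ is continuous on $D$ and holomorphic on the interior of $D$. However, the left-hand derivative of $\gamma$ at $z=1$ does not exist; more precisely, $$\lim_{t\to 1^-}\frac{\gamma(1)-\gamma(t)}{1-t}=+\infty.$$ In particular, the Taylor series expansion of $\gamma(z)$ at $z=0$ has radius of convergence $1$. *)

theory Defs
  imports "HOL-Analysis.Analysis"
begin

text \<open>Coefficient of z^(n-1) in the paper, reindexed from 0: a n = 1/(n+1) - log((n+2)/(n+1)).\<close>
definition gamma_coeff :: "nat \<Rightarrow> real" where
  "gamma_coeff n = 1 / real (Suc n) - ln (real (n + 2) / real (Suc n))"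

definition gamma_series :: "complex \<Rightarrow> complex" where
  "gamma_series z = (\<Sum>m. complex_of_real (gamma_coeff m) * z ^ m)"

end

theory Submission
  imports Defs
begin

text \<open>
  With \<open>x = 1/(n+1)\<close> the coefficient \<open>a\<^sub>n = x - ln (1 + x)\<close> lies between \<open>x\<^sup>2/6\<close> and \<open>x\<^sup>2\<close>.
  Hence \<open>\<Sum> a\<^sub>n\<close> converges, which gives continuity on the closed disk by the Weierstrass M-test,
  while \<open>\<Sum> n a\<^sub>n\<close> diverges like the harmonic series. For \<open>0 \<le> t < 1\<close> the difference quotient
  \<open>(\<gamma>(1) - \<gamma>(t))/(1 - t) = \<Sum> a\<^sub>n (1 + t + \<dots> + t\<^sup>n\<^sup>-\<^sup>1)\<close> has nonnegative terms, and its
  partial sums tend to the unbounded partial sums of \<open>\<Sum> n a\<^sub>n\<close> as \<open>t \<rightarrow> 1\<close>. The same divergence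
  forbids a radius of convergence above 1, since the differentiated series would converge at 1.
\<close>

lemma summable_power_series_on_unit_cball:
  fixes a :: "nat \<Rightarrow> 'a::{real_normed_div_algebra, banach}"
  assumes "summable (\<lambda>n. norm (a n))" and "norm z \<le> 1"
  shows "summable (\<lambda>n. a n * z ^ n)"
proof (rule summable_comparison_test'[OF assms(1)])
  fix n
  have "norm (a n) * norm z ^ n \<le> norm (a n) * 1"
    using assms(2) by (intro mult_left_mono power_le_one) auto
  then show "norm (a n * z ^ n) \<le> norm (a n)"
    by (simp add: norm_mult norm_power)
qed

lemma continuous_on_power_series_unit_cball:
  fixes a :: "nat \<Rightarrow> 'a::{real_normed_div_algebra, banach}"
  assumes "summable (\<lambda>n. norm (a n))"
  shows "continuous_on (cball 0 1) (\<lambda>z. \<Sum>n. a n * z ^ n)"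
proof -
  have "norm (a n * z ^ n) \<le> norm (a n)" if "z \<in> cball 0 1" for n z
    using that mult_left_mono[OF power_le_one[of "norm z" n], of "norm (a n)"]
    by (simp add: norm_mult norm_power)
  then have "uniform_limit (cball 0 1) (\<lambda>N z. \<Sum>n<N. a n * z ^ n)
               (\<lambda>z. \<Sum>n. a n * z ^ n) sequentially"
    by (intro Weierstrass_m_test[OF _ assms]) auto
  then show ?thesis
    by (rule uniform_limit_theorem[rotated]) (auto intro!: always_eventually continuous_intros)
qed

lemma power_series_of_real:
  assumes "summable (\<lambda>n. a n * t ^ n)"
  shows "(\<Sum>n. of_real (a n) * of_real t ^ n) = (of_real (\<Sum>n. a n * t ^ n) :: 'a::real_normed_algebra_1)"
  by (subst suminf_of_real[OF assms]) simp

lemma conv_radius_eq_1: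
  fixes a :: "nat \<Rightarrow> 'a::{real_normed_field, banach}"
  assumes "summable a" and "\<not> summable (\<lambda>n. of_nat n * a n)"
  shows "conv_radius a = 1"
proof (rule antisym)
  show "conv_radius a \<ge> 1"
    using conv_radius_geI[of a 1] assms(1) by (simp add: one_ereal_def)
  show "conv_radius a \<le> 1"
  proof (rule ccontr)
    assume "\<not> conv_radius a \<le> 1"
    then obtain K where K: "1 < K" "ereal K < conv_radius a"
      using ereal_dense2 by (metis not_le one_ereal_def ereal_less_eq(3))
    \<comment> \<open>The differentiated series, whose radius is the same, would converge at 1.\<close>
    have "summable (\<lambda>n. diffs a n * 1 ^ n)"
      using K by (intro termdiff_converges[of 1 K] summable_in_conv_radius)
        (auto intro: order.strict_trans[of _ "ereal K"])
    then have "summable (\<lambda>n. of_nat n * a n)"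
      by (subst summable_Suc_iff[symmetric]) (simp add: diffs_def)
    with assms(2) show False ..
  qed
qed

lemma higher_deriv_power_series_at_0:
  fixes a :: "nat \<Rightarrow> complex"
  assumes "conv_radius a > 0"
  shows "(deriv ^^ n) (\<lambda>z. \<Sum>k. a k * z ^ k) 0 / fact n = a n"
  using fps_nth_conv_deriv[of "Abs_fps a" n] assms
  by (simp add: fps_conv_radius_def eval_fps_def[abs_def])

lemma holomorphic_on_power_series:
  fixes a :: "nat \<Rightarrow> complex"
  assumes "ereal r \<le> conv_radius a"
  shows "(\<lambda>z. \<Sum>n. a n * z ^ n) holomorphic_on ball 0 r"
proof -
  have "ball (0::complex) r \<subseteq> eball 0 (fps_conv_radius (Abs_fps a))"
  proof
    fix z :: complex assume "z \<in> ball 0 r"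
    then have "ereal (norm z) < ereal r" by simp
    from order.strict_trans2[OF this assms]
    show "z \<in> eball 0 (fps_conv_radius (Abs_fps a))"
      by (simp add: fps_conv_radius_def)
  qed
  from holomorphic_on_eval_fps[OF this] show ?thesis
    by (simp add: eval_fps_def[abs_def])
qed

lemma sums_difference_quotient_power_series:
  fixes a :: "nat \<Rightarrow> 'a::{real_normed_field, banach}"
  assumes "summable (\<lambda>n. norm (a n))" and "norm t \<le> 1" and "t \<noteq> 1"
  shows "(\<lambda>n. a n * (\<Sum>k<n. t ^ k)) sums (((\<Sum>n. a n) - (\<Sum>n. a n * t ^ n)) / (1 - t))"
proof -
  have "(\<lambda>n. (a n - a n * t ^ n) / (1 - t)) sums (((\<Sum>n. a n) - (\<Sum>n. a n * t ^ n)) / (1 - t))"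
    using summable_norm_cancel[OF assms(1)] summable_power_series_on_unit_cball[OF assms(1,2)]
    by (intro sums_divide sums_diff summable_sums)
  moreover have "(a n - a n * t ^ n) / (1 - t) = a n * (\<Sum>k<n. t ^ k)" for n
    using assms(3) by (simp add: sum_gp_strict right_diff_distrib)
  ultimately show ?thesis by simp
qed

lemma difference_quotient_power_series_at_left_1:
  fixes a :: "nat \<Rightarrow> real"
  assumes nonneg: "\<And>n. 0 \<le> a n" and "summable a"
    and diverges: "\<not> summable (\<lambda>n. real n * a n)"
  shows "filterlim (\<lambda>t. ((\<Sum>n. a n) - (\<Sum>n. a n * t ^ n)) / (1 - t)) at_top (at_left 1)"
proof (subst filterlim_at_top, intro allI)
  fix B :: real
  obtain N where N: "(\<Sum>n<N. real n * a n) > B"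
  proof (rule ccontr)
    assume "\<not> thesis"
    with that have "(\<Sum>n<N. real n * a n) \<le> B" for N by (meson not_less)
    then have "summable (\<lambda>n. real n * a n)"
      using nonneg by (intro summableI_nonneg_bounded) auto
    with diverges show False ..
  qed
  define P where "P t = (\<Sum>n<N. a n * (\<Sum>k<n. t ^ k))" for t :: real
  have "(P \<longlongrightarrow> P 1) (at_left 1)"
    unfolding P_def by (intro tendsto_intros)
  moreover have "P 1 = (\<Sum>n<N. real n * a n)"
    by (simp add: P_def mult.commute)
  ultimately have "eventually (\<lambda>t. P t > B) (at_left 1)"
    using N by (intro order_tendstoD) auto
  moreover have "eventually (\<lambda>t. t \<in> {0<..<1}) (at_left (1::real))"
    by (rule eventually_at_left_real) simp
  ultimately show "eventually (\<lambda>t. B \<le> ((\<Sum>n. a n) - (\<Sum>n. a n * t ^ n)) / (1 - t)) (at_left 1)"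
  proof eventually_elim
    case (elim t)
    have sums: "(\<lambda>n. a n * (\<Sum>k<n. t ^ k)) sums (((\<Sum>n. a n) - (\<Sum>n. a n * t ^ n)) / (1 - t))"
      using elim(2) nonneg \<open>summable a\<close> by (intro sums_difference_quotient_power_series) auto
    have "P t \<le> ((\<Sum>n. a n) - (\<Sum>n. a n * t ^ n)) / (1 - t)"
      unfolding P_def sums_unique[OF sums] using elim(2)
      by (intro sum_le_suminf sums_summable[OF sums]) (auto intro!: mult_nonneg_nonneg sum_nonneg nonneg)
    with elim(1) show ?case by linarith
  qed
qed

lemma ln_one_plus_pos_upper_bound:
  fixes x :: real
  assumes "0 \<le> x" and "x \<le> 1"
  shows "ln (1 + x) \<le> x - x^2 / 6"
proof -
  define y where "y = x - x^2 / 6"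
  have "x * x \<le> x" using assms by (simp add: mult_left_le)
  then have y: "5 / 6 * x \<le> y" unfolding y_def by (simp add: power2_eq_square)
  then have "(5 / 6 * x)^2 \<le> y^2" using assms by (intro power_mono) auto
  moreover have "(5 / 6 * x)^2 = 25 / 36 * x^2" by (simp add: power2_eq_square)
  moreover have "1 + y + y^2 / 2 \<le> exp y"
    using y assms by (intro exp_lower_Taylor_quadratic) linarith
  ultimately have "1 + x \<le> exp y" using y_def zero_le_power2[of x] by linarith
  then have "ln (1 + x) \<le> ln (exp y)" using assms by (intro ln_mono) auto
  then show ?thesis by (simp add: y_def)
qed

lemma gamma_coeff_eq: "gamma_coeff n = 1 / real (Suc n) - ln (1 + 1 / real (Suc n))"
proof -
  have "real (n + 2) / real (Suc n) = 1 + 1 / real (Suc n)" by (simp add: field_simps)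
  then show ?thesis unfolding gamma_coeff_def by simp
qed

lemma gamma_coeff_nonneg: "0 \<le> gamma_coeff n"
  unfolding gamma_coeff_eq using ln_add_one_self_le_self[of "1 / real (Suc n)"] by simp

lemma gamma_coeff_le: "gamma_coeff n \<le> 1 / real (Suc n)^2"
  unfolding gamma_coeff_eq using ln_one_plus_pos_lower_bound[of "1 / real (Suc n)"]
  by (simp add: power_divide)

lemma gamma_coeff_ge: "1 / (6 * real (Suc n)^2) \<le> gamma_coeff n"
  unfolding gamma_coeff_eq using ln_one_plus_pos_upper_bound[of "1 / real (Suc n)"]
  by (simp add: power_divide)

lemma summable_gamma_coeff: "summable gamma_coeff"
proof (rule summable_comparison_test'[where N = 0])
  have "summable (\<lambda>n. 1 / real n ^ 2)" by (simp add: inverse_power_summable flip: inverse_eq_divide)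
  then show "summable (\<lambda>n. 1 / real (Suc n)^2)" by (subst summable_Suc_iff)
qed (use gamma_coeff_nonneg gamma_coeff_le in auto)

lemma not_summable_index_times_gamma_coeff: "\<not> summable (\<lambda>n. real n * gamma_coeff n)"
proof
  assume "summable (\<lambda>n. real n * gamma_coeff n)"
  then have majorant: "summable (\<lambda>n. 6 * (real n * gamma_coeff n + gamma_coeff n))"
    by (intro summable_mult summable_add summable_gamma_coeff)
  have "inverse (real (Suc n)) \<le> 6 * (real n * gamma_coeff n + gamma_coeff n)" for n
  proof -
    have "inverse (real (Suc n)) = 6 * real (Suc n) * (1 / (6 * real (Suc n)^2))"
      by (simp add: field_simps power2_eq_square del: of_nat_Suc)
    also have "\<dots> \<le> 6 * real (Suc n) * gamma_coeff n"
      by (intro mult_left_mono gamma_coeff_ge) simp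
    finally show ?thesis by (simp add: algebra_simps)
  qed
  then have "summable (\<lambda>n. inverse (real (Suc n)))"
    by (intro summable_comparison_test'[OF majorant, where N = 0]) simp
  then have "summable (\<lambda>n. inverse (real n))" by (subst summable_Suc_iff[symmetric])
  with not_summable_harmonic show False by blast
qed

lemma gamma_series_eq_power_series:
  "gamma_series = (\<lambda>z. \<Sum>n. complex_of_real (gamma_coeff n) * z ^ n)"
  by (simp add: gamma_series_def[abs_def])

lemma summable_norm_gamma_coeff: "summable (\<lambda>n. norm (complex_of_real (gamma_coeff n)))"
  using summable_gamma_coeff by (simp add: gamma_coeff_nonneg)

lemma gamma_series_of_real:
  assumes "\<bar>t\<bar> \<le> 1"
  shows "gamma_series (complex_of_real t) = complex_of_real (\<Sum>n. gamma_coeff n * t ^ n)"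
  unfolding gamma_series_def using summable_gamma_coeff assms
  by (intro power_series_of_real summable_power_series_on_unit_cball) (auto simp: gamma_coeff_nonneg)

lemma conv_radius_gamma_coeff: "conv_radius (\<lambda>n. complex_of_real (gamma_coeff n)) = 1"
proof (rule conv_radius_eq_1)
  show "summable (\<lambda>n. complex_of_real (gamma_coeff n))"
    using summable_gamma_coeff by (simp add: summable_of_real_iff)
  show "\<not> summable (\<lambda>n. of_nat n * complex_of_real (gamma_coeff n))"
  proof -
    have "(\<lambda>n. of_nat n * complex_of_real (gamma_coeff n))
        = (\<lambda>n. complex_of_real (real n * gamma_coeff n))" by simp
    then show ?thesis
      using not_summable_index_times_gamma_coeff summable_of_real_iff by metis
  qed
qed

lemma Re_gamma_difference_quotient:
  assumes "\<bar>t\<bar> \<le> 1"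
  shows "Re ((gamma_series 1 - gamma_series (complex_of_real t)) / (1 - complex_of_real t))
       = ((\<Sum>n. gamma_coeff n) - (\<Sum>n. gamma_coeff n * t ^ n)) / (1 - t)"
proof -
  have "gamma_series 1 = complex_of_real (\<Sum>n. gamma_coeff n)"
    using gamma_series_of_real[of 1] by simp
  moreover have "gamma_series (complex_of_real t) = complex_of_real (\<Sum>n. gamma_coeff n * t ^ n)"
    using assms by (rule gamma_series_of_real)
  ultimately have "(gamma_series 1 - gamma_series (complex_of_real t)) / (1 - complex_of_real t)
      = complex_of_real (((\<Sum>n. gamma_coeff n) - (\<Sum>n. gamma_coeff n * t ^ n)) / (1 - t))"
    by simp
  then show ?thesis by (simp only: Re_complex_of_real)
qed

lemma filterlim_gamma_difference_quotient_at_left_1: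
  "filterlim (\<lambda>t. Re ((gamma_series 1 - gamma_series (complex_of_real t)) / (1 - complex_of_real t)))
     at_top (at_left 1)"
proof -
  have "eventually (\<lambda>t. \<bar>t\<bar> \<le> 1) (at_left (1::real))"
    by (rule eventually_at_leftI[of 0]) auto
  then have "eventually (\<lambda>t. ((\<Sum>n. gamma_coeff n) - (\<Sum>n. gamma_coeff n * t ^ n)) / (1 - t)
      = Re ((gamma_series 1 - gamma_series (complex_of_real t)) / (1 - complex_of_real t))) (at_left 1)"
    by eventually_elim (rule Re_gamma_difference_quotient[symmetric])
  with difference_quotient_power_series_at_left_1[OF gamma_coeff_nonneg summable_gamma_coeff
      not_summable_index_times_gamma_coeff]
  show ?thesis
    by (rule filterlim_cong[THEN iffD1, OF refl refl, rotated])
qed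

theorem theorem5:
  shows "continuous_on (cball 0 1) gamma_series
       \<and> gamma_series holomorphic_on ball 0 1
       \<and> (\<forall>t::real. t \<in> {-1..1} \<longrightarrow> gamma_series (complex_of_real t) \<in> \<real>)
       \<and> filterlim (\<lambda>t::real. Re ((gamma_series 1 - gamma_series (complex_of_real t))
                                     / (1 - complex_of_real t))) at_top (at_left 1)
       \<and> conv_radius (\<lambda>n. (deriv ^^ n) gamma_series 0 / fact n) = 1"
proof (intro conjI allI impI)
  show "continuous_on (cball 0 1) gamma_series"
    unfolding gamma_series_eq_power_series
    by (rule continuous_on_power_series_unit_cball[OF summable_norm_gamma_coeff])
  show "gamma_series holomorphic_on ball 0 1"
    unfolding gamma_series_eq_power_series
    by (rule holomorphic_on_power_series) (simp add: conv_radius_gamma_coeff)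
  show "gamma_series (complex_of_real t) \<in> \<real>" if "t \<in> {-1..1}" for t
    using that by (simp add: gamma_series_of_real abs_le_iff)
  show "filterlim (\<lambda>t::real. Re ((gamma_series 1 - gamma_series (complex_of_real t))
                                     / (1 - complex_of_real t))) at_top (at_left 1)"
    by (rule filterlim_gamma_difference_quotient_at_left_1)
  have "conv_radius (\<lambda>n. complex_of_real (gamma_coeff n)) > 0"
    by (simp add: conv_radius_gamma_coeff)
  then show "conv_radius (\<lambda>n. (deriv ^^ n) gamma_series 0 / fact n) = 1"
    by (simp add: gamma_series_eq_power_series higher_deriv_power_series_at_0 conv_radius_gamma_coeff)
qed

end
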